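(* Let $\lambda\in\mathbb C$ with $|\lambda|<1$ and let $k\ge2$ be an integer. If $\nu_{\lambda^k}$ is absolutely continuous with density in $L^2(\mathbb R^2)$, then $\nu_\lambda$ is absolutely continuous with a continuous density.
   Context: For $|\mu|<1$, $\nu_\mu$ is the distribution on $\mathbb C\cong\mathbb R^2$ of the random series $\sum_{n\ge0}\pm\mu^n$ with signs chosen independently, each with probability $1/2$. *)

theory Defs
  imports "HOL-Probability.Probability"
begin

definition sign_series :: "complex \<Rightarrow> (nat \<Rightarrow> bool) \<Rightarrow> complex" where
  "sign_series \<mu> \<omega> = (\<Sum>n. (if \<omega> n then 1 else -1) * \<mu> ^ n)"

definition coin_space :: "(nat \<Rightarrow> bool) measure" where
  "coin_space = PiM UNIV (\<lambda>_. measure_pmf (bernoulli_pmf (1/2)))"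

text \<open>nu \<mu>: the distribution on the complex plane (= R^2) of the random series.\<close>

definition nu :: "complex \<Rightarrow> complex measure" where
  "nu \<mu> = distr coin_space borel (sign_series \<mu>)"

end

theory Submission
  imports Defs
begin

(* Split the series according to the residue of n mod k.  The terms with n mod k = 0 and
   n mod k = 1 give independent variables Y0 and lam * Y1 with Y0, Y1 distributed by
   nu (lam ^ k), and the remaining terms an independent variable R; so nu lam is the law
   of (Y0 + lam * Y1) + R.  If nu (lam ^ k) has a density f in L^2, then Y0 + lam * Y1 has
   the density w \<mapsto> \<integral> f (w - lam * s) f s ds, which is bounded, and continuous by
   Cauchy-Schwarz and the continuity of translations in L^2.  Adding the independent R
   averages translates of this density, which keeps it continuous.  (lam = 0 is excluded
   because nu 0 has atoms.) *)

section \<open>Continuity of translations in L1 and L2\<close>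

lemma nn_integral_lborel_translate:
  fixes h :: "'a::euclidean_space \<Rightarrow> ennreal"
  assumes [measurable]: "h \<in> borel_measurable borel"
  shows "(\<integral>\<^sup>+x. h (x + a) \<partial>lborel) = (\<integral>\<^sup>+x. h x \<partial>lborel)"
  by (subst lborel_distr_plus[of a, symmetric]) (simp add: nn_integral_distr add.commute)

lemma tendsto_0_ennreal_approx:
  fixes f :: "'a \<Rightarrow> ennreal"
  assumes approx: "\<And>r. 0 < r \<Longrightarrow> \<exists>g. (g \<longlongrightarrow> 0) F \<and> (\<forall>\<^sub>F x in F. f x \<le> g x + ennreal r)"
  shows "(f \<longlongrightarrow> 0) F"
proof (rule order_tendstoI)
  fix e :: ennreal
  assume "0 < e"
  then obtain y where "0 < y" "y < e"
    using dense by blast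
  have "y < \<top>"
    using \<open>y < e\<close> top.not_eq_extremum by fastforce
  define r where "r = enn2real y / 2"
  have "0 < r" "ennreal r + ennreal r < e"
    using \<open>0 < y\<close> \<open>y < e\<close> \<open>y < \<top>\<close>
    by (auto simp: r_def ennreal_plus[symmetric] enn2real_positive_iff simp del: ennreal_plus)
  obtain g where "(g \<longlongrightarrow> 0) F" and f_le: "\<forall>\<^sub>F x in F. f x \<le> g x + ennreal r"
    using approx[OF \<open>0 < r\<close>] by blast
  have "\<forall>\<^sub>F x in F. g x < ennreal r"
    using \<open>(g \<longlongrightarrow> 0) F\<close> by (rule order_tendstoD(2)) (simp add: \<open>0 < r\<close>)
  with f_le show "\<forall>\<^sub>F x in F. f x < e"
  proof eventually_elim
    case (elim x)
    have "g x + ennreal r < ennreal r + ennreal r"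
      using ennreal_add_left_cancel_less[of "ennreal r" "g x" "ennreal r"] elim(2)
      by (simp add: add.commute)
    with elim(1) have "f x < ennreal r + ennreal r"
      by (rule le_less_trans)
    with \<open>ennreal r + ennreal r < e\<close> show ?case by simp
  qed
qed simp

lemma tendsto_nn_integral_escape_open:
  fixes U :: "'a::euclidean_space set"
  assumes "open U" and "emeasure lborel U < \<infinity>"
  shows "((\<lambda>a. \<integral>\<^sup>+x. ennreal (indicator U x * (1 - indicator U (x + a))) \<partial>lborel) \<longlongrightarrow> 0) (at 0)"
  unfolding tendsto_at_iff_sequentially comp_def
proof (intro allI impI)
  have [measurable]: "U \<in> sets borel"
    using \<open>open U\<close> by simp
  fix X :: "nat \<Rightarrow> 'a"
  assume "X \<longlonglongrightarrow> 0"
  have pointwise: "(\<lambda>i. indicator U x * (1 - indicator U (x + X i)) :: real) \<longlonglongrightarrow> 0" for x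
  proof (cases "x \<in> U")
    case True
    then obtain r where "0 < r" "ball x r \<subseteq> U"
      using \<open>open U\<close> open_contains_ball by blast
    from \<open>X \<longlonglongrightarrow> 0\<close> \<open>0 < r\<close> have "\<forall>\<^sub>F i in sequentially. norm (X i) < r"
      by (auto simp: tendsto_iff)
    then have "\<forall>\<^sub>F i in sequentially. indicator U x * (1 - indicator U (x + X i)) = (0 :: real)"
      by eventually_elim (use \<open>ball x r \<subseteq> U\<close> in \<open>auto simp: subset_iff dist_norm\<close>)
    then show ?thesis
      by (rule tendsto_eventually)
  qed simp
  have "(\<integral>\<^sup>+x. ennreal (indicator U x) \<partial>lborel) < \<infinity>"
    using assms(2) by (simp add: ennreal_indicator)
  then have "(\<lambda>i. \<integral>\<^sup>+x. norm (0 - indicator U x * (1 - indicator U (x + X i)) :: real) \<partial>lborel) \<longlonglongrightarrow> 0"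
    by (intro nn_integral_dominated_convergence_norm[where w = "indicator U"])
       (use pointwise in \<open>auto split: split_indicator\<close>)
  moreover have "(\<integral>\<^sup>+x. norm (0 - indicator U x * (1 - indicator U (x + X i)) :: real) \<partial>lborel)
      = (\<integral>\<^sup>+x. ennreal (indicator U x * (1 - indicator U (x + X i))) \<partial>lborel)" for i
    by (intro nn_integral_cong) (auto split: split_indicator)
  ultimately show "(\<lambda>i. \<integral>\<^sup>+x. ennreal (indicator U x * (1 - indicator U (x + X i))) \<partial>lborel) \<longlonglongrightarrow> 0"
    by simp
qed

text \<open>Only the escape of \<open>U\<close> under a translation tends to zero pointwise (points of the
  boundary of \<open>U\<close> may enter \<open>U\<close>); the entering part is the escape under the opposite
  translation.\<close>

lemma tendsto_L1_translate_indicator_open: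
  fixes U :: "'a::euclidean_space set"
  assumes "open U" and "emeasure lborel U < \<infinity>"
  shows "((\<lambda>a. \<integral>\<^sup>+x. ennreal \<bar>indicator U (x + a) - indicator U x\<bar> \<partial>lborel) \<longlongrightarrow> 0) (at 0)"
proof -
  have [measurable]: "U \<in> sets borel"
    using \<open>open U\<close> by simp
  define E where "E a = (\<integral>\<^sup>+x. ennreal (indicator U x * (1 - indicator U (x + a))) \<partial>lborel)" for a
  have split: "(\<integral>\<^sup>+x. ennreal \<bar>indicator U (x + a) - indicator U x\<bar> \<partial>lborel) = E a + E (- a)" for a
  proof -
    have "(\<integral>\<^sup>+x. ennreal \<bar>indicator U (x + a) - indicator U x\<bar> \<partial>lborel)
        = (\<integral>\<^sup>+x. ennreal (indicator U x * (1 - indicator U (x + a)))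
                + ennreal (indicator U (x + a) * (1 - indicator U (x + a + - a))) \<partial>lborel)"
      by (intro nn_integral_cong) (auto split: split_indicator)
    also have "\<dots> = E a + (\<integral>\<^sup>+x. ennreal (indicator U (x + a) * (1 - indicator U (x + a + - a))) \<partial>lborel)"
      unfolding E_def by (rule nn_integral_add) auto
    also have "(\<integral>\<^sup>+x. ennreal (indicator U (x + a) * (1 - indicator U (x + a + - a))) \<partial>lborel) = E (- a)"
      unfolding E_def
      by (rule nn_integral_lborel_translate[of "\<lambda>x. ennreal (indicator U x * (1 - indicator U (x + - a)))"])
         measurable
    finally show ?thesis .
  qed
  have E: "(E \<longlongrightarrow> 0) (at 0)"
    unfolding E_def using assms by (rule tendsto_nn_integral_escape_open)
  have "filterlim uminus (at 0) (at (0 :: 'a))"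
    by (simp add: filterlim_def filtermap_at_minus)
  from tendsto_add[OF E filterlim_compose[OF E this]] show ?thesis
    unfolding split by simp
qed

lemma tendsto_L1_translate_indicator:
  fixes A :: "'a::euclidean_space set"
  assumes [measurable]: "A \<in> sets borel" and "emeasure lborel A < \<infinity>"
  shows "((\<lambda>a. \<integral>\<^sup>+x. ennreal \<bar>indicator A (x + a) - indicator A x\<bar> \<partial>lborel) \<longlongrightarrow> 0) (at 0)"
proof (rule tendsto_0_ennreal_approx)
  fix r :: real
  assume "0 < r"
  then obtain U where "open U" "A \<subseteq> U" and small: "emeasure lborel (U - A) < ennreal (r / 2)"
    using outer_regular_lborel[of A "r / 2"] by auto
  have [measurable]: "U \<in> sets borel"
    using \<open>open U\<close> by simp
  have "emeasure lborel U \<le> emeasure lborel A + emeasure lborel (U - A)"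
    using emeasure_subadditive[of A lborel "U - A"] \<open>A \<subseteq> U\<close> by (simp add: Un_absorb1)
  also have "\<dots> < \<infinity>"
    using assms(2) order.strict_trans[OF small ennreal_less_top] by simp
  finally have "emeasure lborel U < \<infinity>" .
  have "(\<integral>\<^sup>+x. ennreal \<bar>indicator A (x + a) - indicator A x\<bar> \<partial>lborel)
      \<le> (\<integral>\<^sup>+x. ennreal \<bar>indicator U (x + a) - indicator U x\<bar> \<partial>lborel) + ennreal r" for a
  proof -
    have "(\<integral>\<^sup>+x. ennreal \<bar>indicator A (x + a) - indicator A x\<bar> \<partial>lborel)
        \<le> (\<integral>\<^sup>+x. ennreal \<bar>indicator U (x + a) - indicator U x\<bar>
              + indicator (U - A) (x + a) + indicator (U - A) x \<partial>lborel)"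
      by (intro nn_integral_mono) (use \<open>A \<subseteq> U\<close> in \<open>auto split: split_indicator\<close>)
    also have "\<dots> = (\<integral>\<^sup>+x. ennreal \<bar>indicator U (x + a) - indicator U x\<bar> \<partial>lborel)
        + emeasure lborel (U - A) + emeasure lborel (U - A)"
      by (simp add: nn_integral_add nn_integral_lborel_translate[of "indicator (U - A)"])
    also have "\<dots> \<le> (\<integral>\<^sup>+x. ennreal \<bar>indicator U (x + a) - indicator U x\<bar> \<partial>lborel) + ennreal r"
      using add_mono_ennreal[OF small small] \<open>0 < r\<close>
      by (simp add: add.assoc add_left_mono less_imp_le)
    finally show ?thesis .
  qed
  with tendsto_L1_translate_indicator_open[OF \<open>open U\<close> \<open>emeasure lborel U < \<infinity>\<close>]
  show "\<exists>g. (g \<longlongrightarrow> 0) (at 0) \<and>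
      (\<forall>\<^sub>F a in at 0. (\<integral>\<^sup>+x. ennreal \<bar>indicator A (x + a) - indicator A x\<bar> \<partial>lborel) \<le> g a + ennreal r)"
    by (intro exI conjI always_eventually allI)
qed

lemma tendsto_L1_translate_L1_limit:
  fixes g :: "'a::euclidean_space \<Rightarrow> real" and s :: "nat \<Rightarrow> 'a \<Rightarrow> real"
  assumes [measurable]: "g \<in> borel_measurable borel" "\<And>i. s i \<in> borel_measurable borel"
    and approx: "(\<lambda>i. \<integral>\<^sup>+x. ennreal \<bar>g x - s i x\<bar> \<partial>lborel) \<longlonglongrightarrow> 0"
    and translate: "\<And>i. ((\<lambda>a. \<integral>\<^sup>+x. ennreal \<bar>s i (x + a) - s i x\<bar> \<partial>lborel) \<longlongrightarrow> 0) (at 0)"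
  shows "((\<lambda>a. \<integral>\<^sup>+x. ennreal \<bar>g (x + a) - g x\<bar> \<partial>lborel) \<longlongrightarrow> 0) (at 0)"
proof (rule tendsto_0_ennreal_approx)
  fix r :: real
  assume "0 < r"
  with order_tendstoD(2)[OF approx, of "ennreal (r / 2)"]
  obtain i where close: "(\<integral>\<^sup>+x. ennreal \<bar>g x - s i x\<bar> \<partial>lborel) < ennreal (r / 2)"
    by (auto simp: eventually_sequentially)
  have "(\<integral>\<^sup>+x. ennreal \<bar>g (x + a) - g x\<bar> \<partial>lborel)
      \<le> (\<integral>\<^sup>+x. ennreal \<bar>s i (x + a) - s i x\<bar> \<partial>lborel) + ennreal r" for a
  proof -
    have "(\<integral>\<^sup>+x. ennreal \<bar>g (x + a) - g x\<bar> \<partial>lborel)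
        \<le> (\<integral>\<^sup>+x. ennreal \<bar>s i (x + a) - s i x\<bar> + ennreal \<bar>g (x + a) - s i (x + a)\<bar>
              + ennreal \<bar>g x - s i x\<bar> \<partial>lborel)"
      by (intro nn_integral_mono) (simp flip: ennreal_plus)
    also have "\<dots> = (\<integral>\<^sup>+x. ennreal \<bar>s i (x + a) - s i x\<bar> \<partial>lborel)
        + (\<integral>\<^sup>+x. ennreal \<bar>g x - s i x\<bar> \<partial>lborel) + (\<integral>\<^sup>+x. ennreal \<bar>g x - s i x\<bar> \<partial>lborel)"
      using nn_integral_lborel_translate[of "\<lambda>x. ennreal \<bar>g x - s i x\<bar>" a]
      by (simp add: nn_integral_add)
    also have "\<dots> \<le> (\<integral>\<^sup>+x. ennreal \<bar>s i (x + a) - s i x\<bar> \<partial>lborel) + ennreal r"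
      using add_mono_ennreal[OF close close] by (simp add: add.assoc add_left_mono less_imp_le)
    finally show ?thesis .
  qed
  with translate[of i] show "\<exists>h. (h \<longlongrightarrow> 0) (at 0) \<and>
      (\<forall>\<^sub>F a in at 0. (\<integral>\<^sup>+x. ennreal \<bar>g (x + a) - g x\<bar> \<partial>lborel) \<le> h a + ennreal r)"
    by (intro exI conjI always_eventually allI)
qed

lemma tendsto_L1_translate:
  fixes g :: "'a::euclidean_space \<Rightarrow> real"
  assumes "integrable lborel g"
  shows "((\<lambda>a. \<integral>\<^sup>+x. ennreal \<bar>g (x + a) - g x\<bar> \<partial>lborel) \<longlongrightarrow> 0) (at 0)"
  using assms
proof (induct rule: integrable_induct)
  case (base A c)
  then have [measurable]: "A \<in> sets borel"
    by simp
  have "(\<integral>\<^sup>+x. ennreal \<bar>indicator A (x + a) *\<^sub>R c - indicator A x *\<^sub>R c\<bar> \<partial>lborel)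
      = ennreal \<bar>c\<bar> * (\<integral>\<^sup>+x. ennreal \<bar>indicator A (x + a) - indicator A x\<bar> \<partial>lborel)" for a
    by (subst nn_integral_cmult[symmetric])
       (auto intro!: nn_integral_cong simp: ennreal_mult[symmetric] abs_mult[symmetric] algebra_simps)
  with ennreal_tendsto_cmult[OF _ tendsto_L1_translate_indicator, of "ennreal \<bar>c\<bar>" A] base(2)
  show ?case
    by simp
next
  case (add f g)
  then have [measurable]: "f \<in> borel_measurable borel" "g \<in> borel_measurable borel"
    by auto
  have le: "(\<integral>\<^sup>+x. ennreal \<bar>(f (x + a) + g (x + a)) - (f x + g x)\<bar> \<partial>lborel)
      \<le> (\<integral>\<^sup>+x. ennreal \<bar>f (x + a) - f x\<bar> \<partial>lborel) + (\<integral>\<^sup>+x. ennreal \<bar>g (x + a) - g x\<bar> \<partial>lborel)" for a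
    by (subst nn_integral_add[symmetric]) (auto intro!: nn_integral_mono simp flip: ennreal_plus)
  have "((\<lambda>a. (\<integral>\<^sup>+x. ennreal \<bar>f (x + a) - f x\<bar> \<partial>lborel) + (\<integral>\<^sup>+x. ennreal \<bar>g (x + a) - g x\<bar> \<partial>lborel))
      \<longlongrightarrow> 0) (at 0)"
    using tendsto_add[OF add(2,4)] by simp
  from tendsto_sandwich[OF _ _ tendsto_const this] show ?case
    by (simp add: le)
next
  case (lim g s)
  then have [measurable]: "g \<in> borel_measurable borel" "\<And>i. s i \<in> borel_measurable borel"
    by auto
  have "(\<integral>\<^sup>+x. ennreal (2 * norm (g x)) \<partial>lborel) < \<infinity>"
    using lim(5) by (simp add: integrable_iff_bounded ennreal_mult nn_integral_cmult ennreal_mult_less_top)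
  then have "(\<lambda>i. \<integral>\<^sup>+x. norm (g x - s i x) \<partial>lborel) \<longlonglongrightarrow> 0"
    by (intro nn_integral_dominated_convergence_norm[where w = "\<lambda>x. 2 * norm (g x)"])
       (auto intro!: AE_I2 simp: lim(3) lim(4)[simplified])
  with tendsto_L1_translate_L1_limit[of g s] lim(2) show ?case
    by simp
qed

lemma tendsto_L2_translate_nonneg:
  fixes f :: "'a::euclidean_space \<Rightarrow> real"
  assumes [measurable]: "f \<in> borel_measurable borel" and "\<And>x. 0 \<le> f x"
    and "integrable lborel (\<lambda>x. (f x)\<^sup>2)"
  shows "((\<lambda>a. \<integral>\<^sup>+x. ennreal ((f (x + a) - f x)\<^sup>2) \<partial>lborel) \<longlongrightarrow> 0) (at 0)"
proof (rule tendsto_sandwich[OF _ _ tendsto_const tendsto_L1_translate[OF assms(3)]])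
  have "(u - v)\<^sup>2 \<le> \<bar>u\<^sup>2 - v\<^sup>2\<bar>" if "0 \<le> u" "0 \<le> v" for u v :: real
  proof -
    have "(u - v)\<^sup>2 = \<bar>u - v\<bar> * \<bar>u - v\<bar>"
      by (simp add: power2_eq_square)
    also have "\<dots> \<le> \<bar>u - v\<bar> * (u + v)"
      using that by (intro mult_left_mono) auto
    also have "\<dots> = \<bar>(u - v) * (u + v)\<bar>"
      using that by (simp add: abs_mult)
    also have "\<dots> = \<bar>u\<^sup>2 - v\<^sup>2\<bar>"
      by (simp add: power2_eq_square algebra_simps)
    finally show ?thesis .
  qed
  then show "\<forall>\<^sub>F a in at 0. (\<integral>\<^sup>+x. ennreal ((f (x + a) - f x)\<^sup>2) \<partial>lborel)
      \<le> (\<integral>\<^sup>+x. ennreal \<bar>(f (x + a))\<^sup>2 - (f x)\<^sup>2\<bar> \<partial>lborel)"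
    using assms(2) by (intro always_eventually allI nn_integral_mono ennreal_leI) auto
qed simp

section \<open>Lebesgue measure on the complex plane\<close>

lemma borel_measurable_Complex[measurable (raw)]:
  assumes "f \<in> borel_measurable M" "g \<in> borel_measurable M"
  shows "(\<lambda>x. Complex (f x) (g x)) \<in> borel_measurable M"
  using assms unfolding Complex_eq by measurable

lemma lborel_complex_eq_distr_pair:
  "(lborel :: complex measure) = distr (lborel \<Otimes>\<^sub>M lborel) borel (\<lambda>(x, y). Complex x y)"
proof (rule lborel_eqI)
  fix l u :: complex
  assume le: "\<And>b. b \<in> Basis \<Longrightarrow> l \<bullet> b \<le> u \<bullet> b"
  have box: "(\<lambda>(x, y). Complex x y) -` box l u \<inter> space (lborel \<Otimes>\<^sub>M lborel)
      = {Re l<..<Re u} \<times> {Im l<..<Im u}"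
    by (auto simp: mem_box Basis_complex_def space_pair_measure)
  have "emeasure (distr (lborel \<Otimes>\<^sub>M lborel) borel (\<lambda>(x, y). Complex x y)) (box l u)
      = ennreal (Re u - Re l) * ennreal (Im u - Im l)"
    using le[of 1] le[of \<i>]
    by (simp add: emeasure_distr box lborel.emeasure_pair_measure_Times)
  also have "\<dots> = (\<Prod>b\<in>Basis. (u - l) \<bullet> b)"
    using le[of 1] le[of \<i>] by (simp add: Basis_complex_def ennreal_mult)
  finally show "emeasure (distr (lborel \<Otimes>\<^sub>M lborel) borel (\<lambda>(x, y). Complex x y)) (box l u)
      = (\<Prod>b\<in>Basis. (u - l) \<bullet> b)" .
qed simp

lemma nn_integral_lborel_complex:
  fixes h :: "complex \<Rightarrow> ennreal"
  assumes [measurable]: "h \<in> borel_measurable borel"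
  shows "(\<integral>\<^sup>+z. h z \<partial>lborel) = (\<integral>\<^sup>+y. \<integral>\<^sup>+x. h (Complex x y) \<partial>lborel \<partial>lborel)"
  by (subst lborel_complex_eq_distr_pair)
     (simp add: nn_integral_distr lborel_pair.nn_integral_snd[symmetric] case_prod_beta')

text \<open>With \<open>a = Re c \<noteq> 0\<close> and \<open>b = Im c\<close>, multiplication by \<open>c\<close> is
  \<open>(x, y) \<mapsto> (a x - b y, y)\<close> followed by \<open>(u, y) \<mapsto> (u, b u / a + d y)\<close> with
  \<open>d = |c|\<^sup>2 / a\<close>: two one-dimensional affine substitutions, with Jacobians \<open>a\<close> and \<open>d\<close>.\<close>

lemma nn_integral_lborel_complex_mult_Re:
  fixes h :: "complex \<Rightarrow> ennreal"
  assumes [measurable]: "h \<in> borel_measurable borel" and "Re c \<noteq> 0"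
  shows "(\<integral>\<^sup>+z. h z \<partial>lborel) = ennreal ((cmod c)\<^sup>2) * (\<integral>\<^sup>+z. h (c * z) \<partial>lborel)"
proof -
  define a b where "a = Re c" and "b = Im c"
  define d where "d = (a\<^sup>2 + b\<^sup>2) / a"
  have "a \<noteq> 0" "d \<noteq> 0"
    using assms(2) by (auto simp: a_def d_def add_nonneg_eq_0_iff)
  have ad: "\<bar>d\<bar> * \<bar>a\<bar> = (cmod c)\<^sup>2"
    using \<open>a \<noteq> 0\<close> by (simp add: d_def abs_mult[symmetric] cmod_power2 a_def b_def)
  have shear: "Complex (- b * y + a * x) (b / a * (- b * y + a * x) + d * y) = c * Complex x y" for x y
    using \<open>a \<noteq> 0\<close> by (simp add: complex_eq_iff a_def b_def d_def field_simps power2_eq_square)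
  have inner_y: "(\<integral>\<^sup>+y. h (Complex x y) \<partial>lborel)
      = \<bar>d\<bar> * (\<integral>\<^sup>+y. h (Complex x (b / a * x + d * y)) \<partial>lborel)" for x
  proof -
    have "(\<lambda>y. h (Complex x y)) \<in> borel_measurable borel" by measurable
    from nn_integral_real_affine[OF this \<open>d \<noteq> 0\<close>] show ?thesis by simp
  qed
  have inner_x: "(\<integral>\<^sup>+x. h (Complex x (b / a * x + d * y)) \<partial>lborel)
      = \<bar>a\<bar> * (\<integral>\<^sup>+x. h (c * Complex x y) \<partial>lborel)" for y
  proof -
    have "(\<lambda>x. h (Complex x (b / a * x + d * y))) \<in> borel_measurable borel" by measurable
    from nn_integral_real_affine[OF this \<open>a \<noteq> 0\<close>, of "- b * y"] show ?thesis by (simp only: shear)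
  qed
  have "(\<integral>\<^sup>+z. h z \<partial>lborel) = (\<integral>\<^sup>+x. \<integral>\<^sup>+y. h (Complex x y) \<partial>lborel \<partial>lborel)"
    unfolding nn_integral_lborel_complex[OF assms(1)] by (rule lborel_pair.Fubini') measurable
  also have "\<dots> = \<bar>d\<bar> * (\<integral>\<^sup>+x. \<integral>\<^sup>+y. h (Complex x (b / a * x + d * y)) \<partial>lborel \<partial>lborel)"
    unfolding inner_y by (rule nn_integral_cmult) measurable
  also have "(\<integral>\<^sup>+x. \<integral>\<^sup>+y. h (Complex x (b / a * x + d * y)) \<partial>lborel \<partial>lborel)
      = (\<integral>\<^sup>+y. \<integral>\<^sup>+x. h (Complex x (b / a * x + d * y)) \<partial>lborel \<partial>lborel)"
    by (rule lborel_pair.Fubini'[symmetric]) measurable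
  also have "\<dots> = \<bar>a\<bar> * (\<integral>\<^sup>+y. \<integral>\<^sup>+x. h (c * Complex x y) \<partial>lborel \<partial>lborel)"
    unfolding inner_x by (rule nn_integral_cmult) measurable
  also have "(\<integral>\<^sup>+y. \<integral>\<^sup>+x. h (c * Complex x y) \<partial>lborel \<partial>lborel) = (\<integral>\<^sup>+z. h (c * z) \<partial>lborel)"
    by (rule nn_integral_lborel_complex[symmetric]) measurable
  finally show ?thesis
    by (simp add: mult.assoc[symmetric] ennreal_mult'[symmetric] ad)
qed

lemma nn_integral_lborel_complex_mult:
  fixes h :: "complex \<Rightarrow> ennreal"
  assumes [measurable]: "h \<in> borel_measurable borel" and "c \<noteq> 0"
  shows "(\<integral>\<^sup>+z. h z \<partial>lborel) = ennreal ((cmod c)\<^sup>2) * (\<integral>\<^sup>+z. h (c * z) \<partial>lborel)"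
proof (cases "Re c = 0")
  case True
  define c' where "c' = c / (1 + \<i>)"
  have "1 + \<i> \<noteq> 0" "Re (1 + \<i>) \<noteq> 0"
    by (simp_all add: complex_eq_iff)
  have "Re c' \<noteq> 0"
    using True \<open>c \<noteq> 0\<close> by (simp add: c'_def complex_eq_iff Re_divide)
  have c: "(1 + \<i>) * c' = c"
    using \<open>1 + \<i> \<noteq> 0\<close> by (simp add: c'_def)
  have norm_c: "(cmod (1 + \<i>))\<^sup>2 * (cmod c')\<^sup>2 = (cmod c)\<^sup>2"
    using \<open>1 + \<i> \<noteq> 0\<close> by (simp add: c'_def norm_divide power_divide)
  have "(\<integral>\<^sup>+z. h z \<partial>lborel) = ennreal ((cmod (1 + \<i>))\<^sup>2) * (\<integral>\<^sup>+z. h ((1 + \<i>) * z) \<partial>lborel)"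
    by (rule nn_integral_lborel_complex_mult_Re) fact+
  also have "(\<integral>\<^sup>+z. h ((1 + \<i>) * z) \<partial>lborel)
      = ennreal ((cmod c')\<^sup>2) * (\<integral>\<^sup>+z. h ((1 + \<i>) * (c' * z)) \<partial>lborel)"
    by (rule nn_integral_lborel_complex_mult_Re) (measurable, fact)
  finally show ?thesis
    unfolding mult.assoc[symmetric] c by (simp add: ennreal_mult'[symmetric] norm_c)
next
  case False
  then show ?thesis by (rule nn_integral_lborel_complex_mult_Re[OF assms(1)])
qed

lemma nn_integral_lborel_complex_affine:
  fixes h :: "complex \<Rightarrow> ennreal"
  assumes [measurable]: "h \<in> borel_measurable borel" and "c \<noteq> 0"
  shows "(\<integral>\<^sup>+z. h (w - c * z) \<partial>lborel) = ennreal (1 / (cmod c)\<^sup>2) * (\<integral>\<^sup>+z. h z \<partial>lborel)"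
proof -
  have "(\<integral>\<^sup>+z. h z \<partial>lborel) = (\<integral>\<^sup>+z. h (w + z) \<partial>lborel)"
    by (subst lborel_distr_plus[of w, symmetric]) (simp add: nn_integral_distr)
  also have "\<dots> = ennreal ((cmod c)\<^sup>2) * (\<integral>\<^sup>+z. h (w - c * z) \<partial>lborel)"
    using nn_integral_lborel_complex_mult[of "\<lambda>z. h (w + z)" "- c"] \<open>c \<noteq> 0\<close> by simp
  finally show ?thesis
    using \<open>c \<noteq> 0\<close> by (simp add: mult.assoc[symmetric] ennreal_mult'[symmetric])
qed

lemma integrable_lborel_complex_affine:
  fixes h :: "complex \<Rightarrow> real"
  assumes "integrable lborel h" and "c \<noteq> 0"
  shows "integrable lborel (\<lambda>s. h (w - c * s))"
proof -
  have [measurable]: "h \<in> borel_measurable borel"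
    using assms(1) by auto
  have "(\<integral>\<^sup>+s. ennreal (norm (h (w - c * s))) \<partial>lborel)
      = ennreal (1 / (cmod c)\<^sup>2) * (\<integral>\<^sup>+x. ennreal (norm (h x)) \<partial>lborel)"
    by (rule nn_integral_lborel_complex_affine[OF _ \<open>c \<noteq> 0\<close>]) measurable
  also have "\<dots> < \<infinity>"
    using assms(1) by (simp add: integrable_iff_bounded ennreal_mult_less_top)
  finally show ?thesis
    by (simp add: integrable_iff_bounded)
qed

section \<open>Densities of sums\<close>

lemma distr_density_add:
  fixes h :: "'a::euclidean_space \<Rightarrow> ennreal" and \<phi> :: "'b \<Rightarrow> 'a"
  assumes [measurable]: "h \<in> borel_measurable borel" "\<phi> \<in> borel_measurable M"
    and "sigma_finite_measure M"
  shows "distr (density lborel h \<Otimes>\<^sub>M M) borel (\<lambda>(x, y). x + \<phi> y)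
    = density lborel (\<lambda>z. \<integral>\<^sup>+y. h (z - \<phi> y) \<partial>M)"
proof (rule measure_eqI)
  interpret M: sigma_finite_measure M by fact
  interpret pair_sigma_finite lborel M ..
  fix A
  assume "A \<in> sets (distr (density lborel h \<Otimes>\<^sub>M M) borel (\<lambda>(x, y). x + \<phi> y))"
  then have [measurable]: "A \<in> sets borel"
    by simp
  have "emeasure (distr (density lborel h \<Otimes>\<^sub>M M) borel (\<lambda>(x, y). x + \<phi> y)) A
      = (\<integral>\<^sup>+z. indicator A (case z of (x, y) \<Rightarrow> x + \<phi> y) \<partial>(density lborel h \<Otimes>\<^sub>M M))"
    by (simp flip: nn_integral_indicator add: nn_integral_distr del: nn_integral_indicator)
  also have "\<dots> = (\<integral>\<^sup>+x. \<integral>\<^sup>+y. indicator A (x + \<phi> y) \<partial>M \<partial>density lborel h)"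
    by (subst M.nn_integral_fst[symmetric]) (auto simp: case_prod_beta')
  also have "\<dots> = (\<integral>\<^sup>+x. \<integral>\<^sup>+y. h x * indicator A (x + \<phi> y) \<partial>M \<partial>lborel)"
    by (simp add: nn_integral_density nn_integral_cmult)
  also have "\<dots> = (\<integral>\<^sup>+y. \<integral>\<^sup>+x. h x * indicator A (x + \<phi> y) \<partial>lborel \<partial>M)"
    by (rule Fubini'[symmetric]) measurable
  also have "\<dots> = (\<integral>\<^sup>+y. \<integral>\<^sup>+z. h (z - \<phi> y) * indicator A z \<partial>lborel \<partial>M)"
  proof (rule nn_integral_cong)
    fix y
    have "(\<lambda>z. h (z - \<phi> y) * indicator A z) \<in> borel_measurable borel"
      by measurable
    from nn_integral_lborel_translate[OF this, of "\<phi> y"]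
    show "(\<integral>\<^sup>+x. h x * indicator A (x + \<phi> y) \<partial>lborel) = (\<integral>\<^sup>+z. h (z - \<phi> y) * indicator A z \<partial>lborel)"
      by simp
  qed
  also have "\<dots> = (\<integral>\<^sup>+z. \<integral>\<^sup>+y. h (z - \<phi> y) * indicator A z \<partial>M \<partial>lborel)"
    by (rule Fubini') measurable
  also have "\<dots> = emeasure (density lborel (\<lambda>z. \<integral>\<^sup>+y. h (z - \<phi> y) \<partial>M)) A"
    by (simp add: emeasure_density nn_integral_multc)
  finally show "emeasure (distr (density lborel h \<Otimes>\<^sub>M M) borel (\<lambda>(x, y). x + \<phi> y)) A
      = emeasure (density lborel (\<lambda>z. \<integral>\<^sup>+y. h (z - \<phi> y) \<partial>M)) A" .
qed simp

lemma continuous_on_integral_translate: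
  fixes p :: "'a::euclidean_space \<Rightarrow> real"
  assumes p: "continuous_on UNIV p" and p_bounded: "\<And>x. \<bar>p x\<bar> \<le> B"
    and "finite_measure M" and sets_M: "sets M = sets borel"
  shows "continuous_on UNIV (\<lambda>x. LINT y|M. p (x - y))"
proof (intro continuous_at_imp_continuous_on ballI)
  interpret finite_measure M by fact
  have [measurable]: "p \<in> borel_measurable borel"
    using p by (rule borel_measurable_continuous_onI)
  fix x :: 'a
  show "isCont (\<lambda>x. LINT y|M. p (x - y)) x"
    unfolding continuous_at_sequentially comp_def
  proof (intro allI impI)
    fix u :: "nat \<Rightarrow> 'a"
    assume "u \<longlonglongrightarrow> x"
    show "(\<lambda>n. LINT y|M. p (u n - y)) \<longlonglongrightarrow> (LINT y|M. p (x - y))"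
    proof (rule integral_dominated_convergence[where w = "\<lambda>_. B"])
      show "AE y in M. (\<lambda>n. p (u n - y)) \<longlonglongrightarrow> p (x - y)"
        using p \<open>u \<longlonglongrightarrow> x\<close>
        by (intro AE_I2 isCont_tendsto_compose[where g = p] tendsto_intros)
           (auto simp: continuous_on_eq_continuous_at)
    qed (use p_bounded in \<open>auto simp: measurable_cong_sets[OF sets_M refl]\<close>)
  qed
qed

lemma continuous_density_add_finite_measure:
  fixes p :: "'a::euclidean_space \<Rightarrow> real"
  assumes p: "continuous_on UNIV p" and p_nonneg: "\<And>x. 0 \<le> p x" and p_le: "\<And>x. p x \<le> B"
    and "finite_measure M" and sets_M: "sets M = sets borel"
  shows "\<exists>q. continuous_on UNIV q \<and> (\<forall>x. 0 \<le> q x)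
    \<and> distr (density lborel p \<Otimes>\<^sub>M M) borel (\<lambda>(x, y). x + y) = density lborel (\<lambda>x. ennreal (q x))"
proof (intro exI conjI allI)
  interpret finite_measure M by fact
  have [measurable]: "p \<in> borel_measurable borel"
    using p by (rule borel_measurable_continuous_onI)
  have "\<bar>p x\<bar> \<le> B" for x
    using p_nonneg p_le by simp
  then show "continuous_on UNIV (\<lambda>x. LINT y|M. p (x - y))"
    using continuous_on_integral_translate p \<open>finite_measure M\<close> sets_M by blast
  show "0 \<le> (LINT y|M. p (x - y))" for x
    by (rule integral_nonneg_AE) (simp add: p_nonneg)
  have "integrable M (\<lambda>y. p (x - y))" for x
    using p_nonneg p_le
    by (intro integrable_const_bound[where B = B]) (auto simp: measurable_cong_sets[OF sets_M refl])
  moreover have "sigma_finite_measure M"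
    by unfold_locales
  then have "distr (density lborel p \<Otimes>\<^sub>M M) borel (\<lambda>(x, y). x + y)
      = density lborel (\<lambda>x. \<integral>\<^sup>+y. ennreal (p (x - y)) \<partial>M)"
    by (intro distr_density_add) (auto simp: measurable_cong_sets[OF sets_M refl])
  ultimately show "distr (density lborel p \<Otimes>\<^sub>M M) borel (\<lambda>(x, y). x + y)
      = density lborel (\<lambda>x. ennreal (LINT y|M. p (x - y)))"
    using p_nonneg by (simp add: nn_integral_eq_integral)
qed

definition scaled_convolution :: "(complex \<Rightarrow> real) \<Rightarrow> complex \<Rightarrow> (complex \<Rightarrow> real) \<Rightarrow> complex \<Rightarrow> real"
  where "scaled_convolution f c g w = (LINT s|lborel. f (w - c * s) * g s)"

locale square_integrable_densities =
  fixes f g :: "complex \<Rightarrow> real" and c :: complex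
  assumes f_measurable[measurable]: "f \<in> borel_measurable borel"
    and g_measurable[measurable]: "g \<in> borel_measurable borel"
    and f_nonneg: "\<And>x. 0 \<le> f x" and g_nonneg: "\<And>x. 0 \<le> g x"
    and f_square_integrable: "integrable lborel (\<lambda>x. (f x)\<^sup>2)"
    and g_square_integrable: "integrable lborel (\<lambda>x. (g x)\<^sup>2)"
    and c_nonzero: "c \<noteq> 0"
begin

lemma convolution_kernel_le: "f (w - c * s) * g s \<le> (f (w - c * s))\<^sup>2 + (g s)\<^sup>2"
proof -
  have "2 * (f (w - c * s) * g s) \<le> (f (w - c * s))\<^sup>2 + (g s)\<^sup>2"
    using sum_squares_bound[of "f (w - c * s)" "g s"] by (simp add: mult.assoc)
  then show ?thesis
    using mult_nonneg_nonneg[OF f_nonneg g_nonneg, of "w - c * s" s] by linarith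
qed

lemma integrable_convolution_kernel: "integrable lborel (\<lambda>s. f (w - c * s) * g s)"
proof (rule Bochner_Integration.integrable_bound)
  show "integrable lborel (\<lambda>s. (f (w - c * s))\<^sup>2 + (g s)\<^sup>2)"
    using integrable_lborel_complex_affine[OF f_square_integrable c_nonzero] g_square_integrable
    by simp
  show "AE s in lborel. norm (f (w - c * s) * g s) \<le> norm ((f (w - c * s))\<^sup>2 + (g s)\<^sup>2)"
    using convolution_kernel_le f_nonneg g_nonneg by (simp add: abs_of_nonneg)
qed measurable

lemma scaled_convolution_nonneg: "0 \<le> scaled_convolution f c g w"
  unfolding scaled_convolution_def by (rule integral_nonneg_AE) (simp add: f_nonneg g_nonneg)

lemma scaled_convolution_le:
  "scaled_convolution f c g w \<le> (LINT x|lborel. (f x)\<^sup>2) / (cmod c)\<^sup>2 + (LINT x|lborel. (g x)\<^sup>2)"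
proof -
  have "scaled_convolution f c g w \<le> (LINT s|lborel. (f (w - c * s))\<^sup>2 + (g s)\<^sup>2)"
    unfolding scaled_convolution_def
    using integrable_convolution_kernel
      integrable_lborel_complex_affine[OF f_square_integrable c_nonzero] g_square_integrable
    by (intro integral_mono convolution_kernel_le) auto
  also have "\<dots> = (LINT s|lborel. (f (w - c * s))\<^sup>2) + (LINT x|lborel. (g x)\<^sup>2)"
    using integrable_lborel_complex_affine[OF f_square_integrable c_nonzero] g_square_integrable
    by (rule Bochner_Integration.integral_add)
  also have "(LINT s|lborel. (f (w - c * s))\<^sup>2) = (LINT x|lborel. (f x)\<^sup>2) / (cmod c)\<^sup>2"
  proof -
    have "ennreal (LINT s|lborel. (f (w - c * s))\<^sup>2) = (\<integral>\<^sup>+s. ennreal ((f (w - c * s))\<^sup>2) \<partial>lborel)"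
      by (rule nn_integral_eq_integral[symmetric])
         (auto intro: integrable_lborel_complex_affine[OF f_square_integrable c_nonzero])
    also have "\<dots> = ennreal (1 / (cmod c)\<^sup>2) * (\<integral>\<^sup>+x. ennreal ((f x)\<^sup>2) \<partial>lborel)"
      by (rule nn_integral_lborel_complex_affine[OF _ c_nonzero]) measurable
    also have "\<dots> = ennreal ((LINT x|lborel. (f x)\<^sup>2) / (cmod c)\<^sup>2)"
      using f_square_integrable by (simp add: nn_integral_eq_integral ennreal_mult[symmetric])
    finally show ?thesis
      by (subst (asm) ennreal_inj) auto
  qed
  finally show ?thesis .
qed

lemma scaled_convolution_diff_sq_le:
  "ennreal ((scaled_convolution f c g w - scaled_convolution f c g w0)\<^sup>2)
    \<le> ennreal (1 / (cmod c)\<^sup>2) * (\<integral>\<^sup>+s. ennreal ((g s)\<^sup>2) \<partial>lborel)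
        * (\<integral>\<^sup>+x. ennreal ((f (x + (w - w0)) - f x)\<^sup>2) \<partial>lborel)"
proof -
  define \<Delta> where "\<Delta> s = f (w - c * s) - f (w0 - c * s)" for s
  have [measurable]: "\<Delta> \<in> borel_measurable borel"
    unfolding \<Delta>_def by measurable
  have "scaled_convolution f c g w - scaled_convolution f c g w0 = (LINT s|lborel. \<Delta> s * g s)"
    unfolding scaled_convolution_def \<Delta>_def
    by (simp add: Bochner_Integration.integral_diff[OF integrable_convolution_kernel integrable_convolution_kernel]
        left_diff_distrib)
  moreover have "integrable lborel (\<lambda>s. \<Delta> s * g s)"
    unfolding \<Delta>_def left_diff_distrib
    by (intro Bochner_Integration.integrable_diff integrable_convolution_kernel)
  ultimately have "ennreal \<bar>scaled_convolution f c g w - scaled_convolution f c g w0\<bar>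
      \<le> (\<integral>\<^sup>+s. ennreal \<bar>\<Delta> s\<bar> * ennreal (g s) \<partial>lborel)"
    using integral_norm_bound_ennreal[of lborel "\<lambda>s. \<Delta> s * g s"]
    by (simp add: abs_mult g_nonneg ennreal_mult)
  then have "(ennreal \<bar>scaled_convolution f c g w - scaled_convolution f c g w0\<bar>)\<^sup>2
      \<le> (\<integral>\<^sup>+s. ennreal \<bar>\<Delta> s\<bar> * ennreal (g s) \<partial>lborel)\<^sup>2"
    by (rule power_mono) simp
  then have "ennreal ((scaled_convolution f c g w - scaled_convolution f c g w0)\<^sup>2)
      \<le> (\<integral>\<^sup>+s. ennreal \<bar>\<Delta> s\<bar> * ennreal (g s) \<partial>lborel)\<^sup>2"
    by (simp add: ennreal_power)
  also have "\<dots> \<le> (\<integral>\<^sup>+s. ennreal \<bar>\<Delta> s\<bar> ^ 2 \<partial>lborel) * (\<integral>\<^sup>+s. ennreal (g s) ^ 2 \<partial>lborel)"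
    by (rule Cauchy_Schwarz_nn_integral) measurable
  also have "(\<integral>\<^sup>+s. ennreal \<bar>\<Delta> s\<bar> ^ 2 \<partial>lborel)
      = (\<integral>\<^sup>+s. ennreal ((f (w0 - c * s + (w - w0)) - f (w0 - c * s))\<^sup>2) \<partial>lborel)"
    by (simp add: \<Delta>_def ennreal_power)
  also have "\<dots> = ennreal (1 / (cmod c)\<^sup>2) * (\<integral>\<^sup>+x. ennreal ((f (x + (w - w0)) - f x)\<^sup>2) \<partial>lborel)"
    by (rule nn_integral_lborel_complex_affine[OF _ c_nonzero]) measurable
  finally show ?thesis
    by (simp add: ennreal_power g_nonneg mult_ac)
qed

lemma continuous_on_scaled_convolution: "continuous_on UNIV (scaled_convolution f c g)"
proof (intro continuous_at_imp_continuous_on ballI)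
  fix w0 :: complex
  define K where "K = ennreal (1 / (cmod c)\<^sup>2) * (\<integral>\<^sup>+s. ennreal ((g s)\<^sup>2) \<partial>lborel)"
  define T where "T a = (\<integral>\<^sup>+x. ennreal ((f (x + a) - f x)\<^sup>2) \<partial>lborel)" for a
  have "K < \<top>"
    using g_square_integrable by (simp add: K_def nn_integral_eq_integral ennreal_mult_less_top)
  have "(T \<longlongrightarrow> 0) (at 0)"
    unfolding T_def by (rule tendsto_L2_translate_nonneg[OF f_measurable f_nonneg f_square_integrable])
  then have "((\<lambda>w. T (w - w0)) \<longlongrightarrow> 0) (at w0)"
    using LIM_offset_zero_cancel[of "\<lambda>w. T (w - w0)" w0 0] by simp
  from ennreal_tendsto_cmult[OF \<open>K < \<top>\<close> this]
  have lim: "((\<lambda>w. K * T (w - w0)) \<longlongrightarrow> 0) (at w0)"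
    by simp
  have le: "ennreal ((scaled_convolution f c g w - scaled_convolution f c g w0)\<^sup>2) \<le> K * T (w - w0)" for w
    unfolding K_def T_def by (rule scaled_convolution_diff_sq_le)
  have "((\<lambda>w. ennreal ((scaled_convolution f c g w - scaled_convolution f c g w0)\<^sup>2)) \<longlongrightarrow> 0) (at w0)"
    by (rule tendsto_sandwich[OF _ _ tendsto_const lim]) (simp_all add: le)
  then have "((\<lambda>w. (scaled_convolution f c g w - scaled_convolution f c g w0)\<^sup>2) \<longlongrightarrow> 0) (at w0)"
    using tendsto_ennreal_iff[of "\<lambda>w. (scaled_convolution f c g w - scaled_convolution f c g w0)\<^sup>2" "at w0" 0]
    by simp
  then have "((\<lambda>w. scaled_convolution f c g w - scaled_convolution f c g w0) \<longlongrightarrow> 0) (at w0)"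
    by simp
  then show "isCont (scaled_convolution f c g) w0"
    by (simp add: isCont_def LIM_zero_iff)
qed

lemma distr_pair_density_scaled_add:
  "distr (density lborel f \<Otimes>\<^sub>M density lborel g) borel (\<lambda>(x, y). x + c * y)
    = density lborel (\<lambda>w. ennreal (scaled_convolution f c g w))"
proof -
  have "sigma_finite_measure (density lborel g)"
    by (subst sigma_finite_measure.sigma_finite_iff_density_finite[OF sigma_finite_lborel]) auto
  then have "distr (density lborel f \<Otimes>\<^sub>M density lborel g) borel (\<lambda>(x, y). x + c * y)
      = density lborel (\<lambda>w. \<integral>\<^sup>+y. ennreal (f (w - c * y)) \<partial>density lborel g)"
    by (intro distr_density_add) auto
  also have "(\<lambda>w. \<integral>\<^sup>+y. ennreal (f (w - c * y)) \<partial>density lborel g)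
      = (\<lambda>w. ennreal (scaled_convolution f c g w))"
  proof
    fix w
    have "(\<integral>\<^sup>+y. ennreal (f (w - c * y)) \<partial>density lborel g) = (\<integral>\<^sup>+y. ennreal (f (w - c * y) * g y) \<partial>lborel)"
      by (simp add: nn_integral_density ennreal_mult'[symmetric] g_nonneg mult.commute)
    also have "\<dots> = ennreal (scaled_convolution f c g w)"
      unfolding scaled_convolution_def
      by (rule nn_integral_eq_integral[OF integrable_convolution_kernel]) (simp add: f_nonneg g_nonneg)
    finally show "(\<integral>\<^sup>+y. ennreal (f (w - c * y)) \<partial>density lborel g) = ennreal (scaled_convolution f c g w)" .
  qed
  finally show ?thesis .
qed

end

section \<open>The random sign series\<close>

abbreviation fair_coin :: "bool measure" where
  "fair_coin \<equiv> measure_pmf (bernoulli_pmf (1 / 2))"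

definition coin_sign :: "bool \<Rightarrow> complex" where
  "coin_sign b = (if b then 1 else -1)"

lemma norm_coin_sign [simp]: "norm (coin_sign b) = 1"
  by (simp add: coin_sign_def)

lemma measurable_coin_sign [measurable]: "coin_sign \<in> borel_measurable fair_coin"
  by simp

definition partial_sign_series :: "nat set \<Rightarrow> complex \<Rightarrow> (nat \<Rightarrow> bool) \<Rightarrow> complex" where
  "partial_sign_series I \<mu> \<omega> = (\<Sum>n. if n \<in> I then coin_sign (\<omega> n) * \<mu> ^ n else 0)"

lemma sign_series_eq_partial_sign_series: "sign_series \<mu> = partial_sign_series UNIV \<mu>"
  by (simp add: fun_eq_iff sign_series_def partial_sign_series_def coin_sign_def)

lemma summable_partial_sign_series_terms:
  assumes "cmod \<mu> < 1"
  shows "summable (\<lambda>n. if n \<in> I then coin_sign (\<omega> n) * \<mu> ^ n else 0)"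
  by (rule summable_comparison_test[where g = "\<lambda>n. cmod \<mu> ^ n"])
     (use assms in \<open>auto simp: norm_mult norm_power summable_geometric\<close>)

lemma partial_sign_series_Un:
  assumes "cmod \<mu> < 1" and "I \<inter> J = {}"
  shows "partial_sign_series (I \<union> J) \<mu> \<omega> = partial_sign_series I \<mu> \<omega> + partial_sign_series J \<mu> \<omega>"
proof -
  have "(\<lambda>n. if n \<in> I \<union> J then coin_sign (\<omega> n) * \<mu> ^ n else 0)
      = (\<lambda>n. (if n \<in> I then coin_sign (\<omega> n) * \<mu> ^ n else 0) + (if n \<in> J then coin_sign (\<omega> n) * \<mu> ^ n else 0))"
    using assms(2) by (auto simp: fun_eq_iff)
  then show ?thesis
    unfolding partial_sign_series_def
    using suminf_add[OF summable_partial_sign_series_terms summable_partial_sign_series_terms] assms(1)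
    by simp
qed

lemma partial_sign_series_residue:
  assumes "cmod \<mu> < 1" and "r < k"
  shows "partial_sign_series {n. n mod k = r} \<mu> \<omega> = \<mu> ^ r * sign_series (\<mu> ^ k) (\<lambda>m. \<omega> (k * m + r))"
proof -
  define F where "F n = (if n \<in> {n. n mod k = r} then coin_sign (\<omega> n) * \<mu> ^ n else 0)" for n
  have "strict_mono (\<lambda>m. k * m + r)"
    using assms(2) by (auto simp: strict_mono_def)
  moreover have "F n = 0" if "n \<notin> range (\<lambda>m. k * m + r)" for n
  proof (rule ccontr)
    assume "F n \<noteq> 0"
    then have "n = k * (n div k) + r"
      using mult_div_mod_eq[of k n] by (auto simp: F_def split: if_splits)
    then have "n \<in> range (\<lambda>m. k * m + r)"
      by (rule image_eqI) simp
    with that show False ..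
  qed
  ultimately have "(\<Sum>m. F (k * m + r)) = (\<Sum>n. F n)"
    by (rule suminf_mono_reindex)
  then have "partial_sign_series {n. n mod k = r} \<mu> \<omega>
      = (\<Sum>m. if (k * m + r) mod k = r then coin_sign (\<omega> (k * m + r)) * \<mu> ^ (k * m + r) else 0)"
    by (simp add: partial_sign_series_def F_def)
  also have "\<dots> = (\<Sum>m. \<mu> ^ r * (coin_sign (\<omega> (k * m + r)) * (\<mu> ^ k) ^ m))"
  proof -
    have "\<mu> ^ (k * m + r) = \<mu> ^ r * (\<mu> ^ k) ^ m" for m
      by (simp add: power_add power_mult)
    with assms(2) show ?thesis
      by (simp add: mult_ac)
  qed
  also have "\<dots> = \<mu> ^ r * (\<Sum>m. coin_sign (\<omega> (k * m + r)) * (\<mu> ^ k) ^ m)"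
  proof (rule suminf_mult)
    have "cmod (\<mu> ^ k) < 1"
      using assms by (simp add: norm_power power_less_one_iff)
    then show "summable (\<lambda>m. coin_sign (\<omega> (k * m + r)) * (\<mu> ^ k) ^ m)"
      using summable_partial_sign_series_terms[of "\<mu> ^ k" UNIV "\<lambda>m. \<omega> (k * m + r)"] by simp
  qed
  finally show ?thesis
    by (simp add: sign_series_def coin_sign_def)
qed

lemma sign_series_split_residues:
  assumes "cmod lam < 1" and "2 \<le> k"
  shows "sign_series lam \<omega> = sign_series (lam ^ k) (\<lambda>m. \<omega> (k * m))
      + lam * sign_series (lam ^ k) (\<lambda>m. \<omega> (k * m + 1)) + partial_sign_series {n. 2 \<le> n mod k} lam \<omega>"
proof -
  define I0 I1 I2 where "I0 = {n. n mod k = 0}" and "I1 = {n. n mod k = 1}" and "I2 = {n. 2 \<le> n mod k}"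
  have "(I0 \<union> I1) \<union> I2 = UNIV" "I0 \<inter> I1 = {}" "(I0 \<union> I1) \<inter> I2 = {}"
    by (auto simp: I0_def I1_def I2_def)
  have "sign_series lam \<omega> = partial_sign_series ((I0 \<union> I1) \<union> I2) lam \<omega>"
    using \<open>(I0 \<union> I1) \<union> I2 = UNIV\<close> by (simp add: sign_series_eq_partial_sign_series)
  also have "\<dots> = partial_sign_series (I0 \<union> I1) lam \<omega> + partial_sign_series I2 lam \<omega>"
    by (rule partial_sign_series_Un) fact+
  also have "partial_sign_series (I0 \<union> I1) lam \<omega> = partial_sign_series I0 lam \<omega> + partial_sign_series I1 lam \<omega>"
    by (rule partial_sign_series_Un) fact+
  also have "partial_sign_series I0 lam \<omega> = sign_series (lam ^ k) (\<lambda>m. \<omega> (k * m))"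
    using partial_sign_series_residue[of lam 0 k \<omega>] assms by (simp add: I0_def)
  also have "partial_sign_series I1 lam \<omega> = lam * sign_series (lam ^ k) (\<lambda>m. \<omega> (k * m + 1))"
    using partial_sign_series_residue[of lam 1 k \<omega>] assms by (simp add: I1_def)
  finally show ?thesis
    by (simp add: I2_def)
qed

lemma prob_space_coin_space: "prob_space coin_space"
  unfolding coin_space_def by (intro prob_space_PiM measure_pmf.prob_space_axioms)

lemma measurable_sign_series_reindex:
  assumes "\<And>m. T m \<in> I"
  shows "(\<lambda>\<omega>. sign_series \<mu> (\<lambda>m. \<omega> (T m))) \<in> borel_measurable (\<Pi>\<^sub>M i\<in>I. fair_coin)"
proof -
  have "(\<lambda>\<omega>. coin_sign (\<omega> (T m)) * \<mu> ^ m) \<in> borel_measurable (\<Pi>\<^sub>M i\<in>I. fair_coin)" for m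
    using measurable_component_singleton[OF assms, where M = "\<lambda>_. fair_coin"] by measurable
  then have "(\<lambda>\<omega>. \<Sum>m. coin_sign (\<omega> (T m)) * \<mu> ^ m) \<in> borel_measurable (\<Pi>\<^sub>M i\<in>I. fair_coin)"
    by (rule borel_measurable_suminf)
  then show ?thesis
    by (simp add: sign_series_def coin_sign_def)
qed

lemma measurable_partial_sign_series:
  assumes "I \<subseteq> J"
  shows "partial_sign_series I \<mu> \<in> borel_measurable (\<Pi>\<^sub>M i\<in>J. fair_coin)"
proof -
  have "(\<lambda>\<omega>. if n \<in> I then coin_sign (\<omega> n) * \<mu> ^ n else 0) \<in> borel_measurable (\<Pi>\<^sub>M i\<in>J. fair_coin)" for n
  proof (cases "n \<in> I")
    case True
    with assms have "n \<in> J"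
      by blast
    with True measurable_component_singleton[OF this, where M = "\<lambda>_. fair_coin"] show ?thesis
      by simp measurable
  qed simp
  then show ?thesis
    unfolding partial_sign_series_def[abs_def] by (rule borel_measurable_suminf)
qed

lemma partial_sign_series_restrict: "partial_sign_series I \<mu> (restrict \<omega> I) = partial_sign_series I \<mu> \<omega>"
  by (simp add: partial_sign_series_def cong: if_cong)

lemma indep_vars_coin_space: "prob_space.indep_vars coin_space (\<lambda>_. fair_coin) (\<lambda>i \<omega>. \<omega> i) UNIV"
proof -
  interpret prob_space coin_space
    by (rule prob_space_coin_space)
  have component: "random_variable fair_coin (\<lambda>\<omega>. \<omega> i)" for i
    unfolding coin_space_def by (rule measurable_component_singleton) simp
  have "distr coin_space fair_coin (\<lambda>\<omega>. \<omega> i) = fair_coin" for i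
    unfolding coin_space_def by (rule distr_PiM_component) (auto intro: measure_pmf.prob_space_axioms)
  moreover have "distr coin_space coin_space (\<lambda>\<omega>. \<lambda>i\<in>UNIV. \<omega> i) = coin_space"
    by (simp add: restrict_UNIV distr_id2 coin_space_def)
  ultimately show ?thesis
    by (subst indep_vars_iff_distr_eq_PiM) (use component in \<open>simp_all add: coin_space_def\<close>)
qed

lemma indep_var_coin_space:
  assumes "I \<inter> J = {}"
    and "F \<in> borel_measurable (\<Pi>\<^sub>M i\<in>I. fair_coin)" and "G \<in> borel_measurable (\<Pi>\<^sub>M i\<in>J. fair_coin)"
  shows "prob_space.indep_var coin_space borel (\<lambda>\<omega>. F (restrict \<omega> I)) borel (\<lambda>\<omega>. G (restrict \<omega> J))"
proof -
  interpret prob_space coin_space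
    by (rule prob_space_coin_space)
  from indep_var_restrict[OF indep_vars_coin_space assms(1)]
  have "indep_var (\<Pi>\<^sub>M i\<in>I. fair_coin) (\<lambda>\<omega>. restrict \<omega> I) (\<Pi>\<^sub>M i\<in>J. fair_coin) (\<lambda>\<omega>. restrict \<omega> J)"
    by simp
  from indep_var_compose[OF this assms(2,3)] show ?thesis
    by (simp add: comp_def)
qed

lemma measurable_sign_series_coin_space [measurable]: "sign_series \<mu> \<in> borel_measurable coin_space"
  using measurable_sign_series_reindex[of id UNIV \<mu>] by (simp add: coin_space_def)

lemma distr_sign_series_reindex:
  assumes "inj f"
  shows "distr coin_space borel (\<lambda>\<omega>. sign_series \<mu> (\<lambda>m. \<omega> (f m))) = nu \<mu>"
proof -
  have reindex: "(\<lambda>\<omega> n. \<omega> (f n)) \<in> coin_space \<rightarrow>\<^sub>M coin_space"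
    unfolding coin_space_def by (rule measurable_PiM_single') (auto intro: measurable_component_singleton)
  have "distr coin_space borel (\<lambda>\<omega>. sign_series \<mu> (\<lambda>m. \<omega> (f m)))
      = distr (distr coin_space coin_space (\<lambda>\<omega> n. \<omega> (f n))) borel (sign_series \<mu>)"
    using reindex by (simp add: distr_distr comp_def)
  also have "distr coin_space coin_space (\<lambda>\<omega> n. \<omega> (f n)) = coin_space"
    using distr_PiM_reindex[of UNIV "\<lambda>_. fair_coin" f UNIV] assms
    by (simp add: coin_space_def restrict_UNIV measure_pmf.prob_space_axioms)
  finally show ?thesis
    by (simp add: nu_def)
qed

lemma (in prob_space) distr_indep_var_pair:
  assumes "indep_var borel X borel Y" and "(\<lambda>(x, y). h x y) \<in> borel_measurable (borel \<Otimes>\<^sub>M borel)"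
  shows "distr M borel (\<lambda>\<omega>. h (X \<omega>) (Y \<omega>))
    = distr (distr M borel X \<Otimes>\<^sub>M distr M borel Y) borel (\<lambda>(x, y). h x y)"
proof -
  have "random_variable borel X" "random_variable borel Y"
    and "distr M borel X \<Otimes>\<^sub>M distr M borel Y = distr M (borel \<Otimes>\<^sub>M borel) (\<lambda>\<omega>. (X \<omega>, Y \<omega>))"
    using assms(1) by (simp_all add: indep_var_distribution_eq)
  then show ?thesis
    using assms(2) by (simp add: distr_distr comp_def)
qed

lemma indep_var_residue_series:
  fixes \<mu> c \<nu> :: complex and k :: nat
  assumes "2 \<le> k"
  defines "X \<equiv> \<lambda>\<omega>. sign_series \<mu> (\<lambda>m. \<omega> (k * m))" and "Y \<equiv> \<lambda>\<omega>. sign_series \<mu> (\<lambda>m. \<omega> (k * m + 1))"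
  shows "prob_space.indep_var coin_space borel X borel Y"
    and "prob_space.indep_var coin_space borel (\<lambda>\<omega>. X \<omega> + c * Y \<omega>) borel
      (partial_sign_series {n. 2 \<le> n mod k} \<nu>)"
proof -
  define I0 I1 I2 where "I0 = {n. n mod k = 0}" and "I1 = {n. n mod k = 1}" and "I2 = {n. 2 \<le> n mod k}"
  have I0: "k * m \<in> I0" and I1: "k * m + 1 \<in> I1" for m
    using assms(1) by (auto simp: I0_def I1_def mod_Suc)
  have "I0 \<inter> I1 = {}" "(I0 \<union> I1) \<inter> I2 = {}"
    by (auto simp: I0_def I1_def I2_def)
  have measurable_X: "(\<lambda>\<omega>. sign_series \<mu> (\<lambda>m. \<omega> (k * m))) \<in> borel_measurable (\<Pi>\<^sub>M i\<in>I. fair_coin)"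
    and restrict_X: "(\<lambda>\<omega>. sign_series \<mu> (\<lambda>m. restrict \<omega> I (k * m))) = X" if "I0 \<subseteq> I" for I
  proof -
    have "k * m \<in> I" for m
      using that I0 by blast
    then show "(\<lambda>\<omega>. sign_series \<mu> (\<lambda>m. \<omega> (k * m))) \<in> borel_measurable (\<Pi>\<^sub>M i\<in>I. fair_coin)"
      and "(\<lambda>\<omega>. sign_series \<mu> (\<lambda>m. restrict \<omega> I (k * m))) = X"
      by (simp_all add: measurable_sign_series_reindex fun_eq_iff X_def)
  qed
  have measurable_Y: "(\<lambda>\<omega>. sign_series \<mu> (\<lambda>m. \<omega> (k * m + 1))) \<in> borel_measurable (\<Pi>\<^sub>M i\<in>I. fair_coin)"
    and restrict_Y: "(\<lambda>\<omega>. sign_series \<mu> (\<lambda>m. restrict \<omega> I (k * m + 1))) = Y" if "I1 \<subseteq> I" for I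
  proof -
    have "k * m + 1 \<in> I" for m
      using that I1 by blast
    then show "(\<lambda>\<omega>. sign_series \<mu> (\<lambda>m. \<omega> (k * m + 1))) \<in> borel_measurable (\<Pi>\<^sub>M i\<in>I. fair_coin)"
      and "(\<lambda>\<omega>. sign_series \<mu> (\<lambda>m. restrict \<omega> I (k * m + 1))) = Y"
      by (simp_all add: measurable_sign_series_reindex fun_eq_iff Y_def)
  qed
  show "prob_space.indep_var coin_space borel X borel Y"
    using indep_var_coin_space[OF \<open>I0 \<inter> I1 = {}\<close> measurable_X[OF order_refl] measurable_Y[OF order_refl]]
    unfolding restrict_X[OF order_refl] restrict_Y[OF order_refl] .
  have "(\<lambda>\<omega>. sign_series \<mu> (\<lambda>m. \<omega> (k * m)) + c * sign_series \<mu> (\<lambda>m. \<omega> (k * m + 1)))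
      \<in> borel_measurable (\<Pi>\<^sub>M i\<in>I0 \<union> I1. fair_coin)"
    using measurable_X[of "I0 \<union> I1"] measurable_Y[of "I0 \<union> I1"] by simp
  from indep_var_coin_space[OF \<open>(I0 \<union> I1) \<inter> I2 = {}\<close> this measurable_partial_sign_series[OF order_refl]]
  show "prob_space.indep_var coin_space borel (\<lambda>\<omega>. X \<omega> + c * Y \<omega>) borel
      (partial_sign_series {n. 2 \<le> n mod k} \<nu>)"
    using restrict_X[of "I0 \<union> I1"] restrict_Y[of "I0 \<union> I1"]
    unfolding I2_def partial_sign_series_restrict by (simp add: fun_eq_iff)
qed

lemma nu_decomposition:
  assumes "cmod lam < 1" and "2 \<le> k"
  shows "nu lam = distr (distr (nu (lam ^ k) \<Otimes>\<^sub>M nu (lam ^ k)) borel (\<lambda>(x, y). x + lam * y)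
      \<Otimes>\<^sub>M distr coin_space borel (partial_sign_series {n. 2 \<le> n mod k} lam)) borel (\<lambda>(x, y). x + y)"
proof -
  interpret prob_space coin_space
    by (rule prob_space_coin_space)
  define X Y where "X \<omega> = sign_series (lam ^ k) (\<lambda>m. \<omega> (k * m))"
    and "Y \<omega> = sign_series (lam ^ k) (\<lambda>m. \<omega> (k * m + 1))" for \<omega> :: "nat \<Rightarrow> bool"
  define R where "R = partial_sign_series {n. 2 \<le> n mod k} lam"
  have "sign_series lam = (\<lambda>\<omega>. (X \<omega> + lam * Y \<omega>) + R \<omega>)"
    using sign_series_split_residues[OF assms] by (simp add: fun_eq_iff X_def Y_def R_def)
  then have "nu lam = distr coin_space borel (\<lambda>\<omega>. (X \<omega> + lam * Y \<omega>) + R \<omega>)"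
    by (simp add: nu_def)
  also have "\<dots> = distr (distr coin_space borel (\<lambda>\<omega>. X \<omega> + lam * Y \<omega>) \<Otimes>\<^sub>M distr coin_space borel R)
      borel (\<lambda>(x, y). x + y)"
    using indep_var_residue_series(2)[OF assms(2)]
    by (intro distr_indep_var_pair) (simp_all add: X_def[abs_def] Y_def[abs_def] R_def)
  also have "distr coin_space borel (\<lambda>\<omega>. X \<omega> + lam * Y \<omega>)
      = distr (distr coin_space borel X \<Otimes>\<^sub>M distr coin_space borel Y) borel (\<lambda>(x, y). x + lam * y)"
    using indep_var_residue_series(1)[OF assms(2)]
    by (intro distr_indep_var_pair) (simp_all add: X_def[abs_def] Y_def[abs_def])
  also have "distr coin_space borel X = nu (lam ^ k)"
    unfolding X_def by (rule distr_sign_series_reindex) (use assms(2) in \<open>simp add: inj_on_def\<close>)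
  also have "distr coin_space borel Y = nu (lam ^ k)"
    unfolding Y_def by (rule distr_sign_series_reindex) (use assms(2) in \<open>simp add: inj_on_def\<close>)
  finally show ?thesis
    by (simp add: R_def)
qed

lemma nu_zero_not_density:
  assumes "g \<in> borel_measurable borel"
  shows "nu 0 \<noteq> density lborel g"
proof
  assume nu_0: "nu 0 = density lborel g"
  have "sign_series 0 \<omega> = (if \<omega> 0 then 1 else -1)" for \<omega>
    unfolding sign_series_def by (rule sums_unique[symmetric]) (rule powser_sums_zero)
  then have "sign_series 0 -` {1} \<inter> space coin_space = (\<lambda>\<omega>. \<omega> 0) -` {True} \<inter> space coin_space"
    by (simp add: set_eq_iff)
  moreover have component: "(\<lambda>\<omega>. \<omega> 0) \<in> coin_space \<rightarrow>\<^sub>M fair_coin"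
    unfolding coin_space_def by (rule measurable_component_singleton) simp
  ultimately have "emeasure (nu 0) {1} = emeasure (distr coin_space fair_coin (\<lambda>\<omega>. \<omega> 0)) {True}"
    unfolding nu_def by (simp add: emeasure_distr)
  also have "distr coin_space fair_coin (\<lambda>\<omega>. \<omega> 0) = fair_coin"
    unfolding coin_space_def by (rule distr_PiM_component) (auto intro: measure_pmf.prob_space_axioms)
  finally have "emeasure (nu 0) {1} = ennreal (1 / 2)"
    by (simp add: emeasure_pmf_single)
  moreover have "emeasure (density lborel g) {1} = 0"
  proof -
    have "AE x in lborel. g x * indicator {1} x = 0"
      using AE_lborel_singleton[of 1] by eventually_elim simp
    then show ?thesis
      using assms by (simp add: emeasure_density nn_integral_cong_AE)
  qed
  ultimately show False
    using nu_0 by simp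
qed

theorem mainTheorem18:
  fixes lam :: complex and k :: nat
  assumes "norm lam < 1" and "k \<ge> 2"
    and "\<exists>f :: complex \<Rightarrow> real. f \<in> borel_measurable borel \<and> (\<forall>x. 0 \<le> f x)
          \<and> nu (lam ^ k) = density lborel (\<lambda>x. ennreal (f x))
          \<and> integrable lborel (\<lambda>x. (f x)\<^sup>2)"
  shows "\<exists>g :: complex \<Rightarrow> real. continuous_on UNIV g \<and> (\<forall>x. 0 \<le> g x)
          \<and> nu lam = density lborel (\<lambda>x. ennreal (g x))"
proof -
  obtain f :: "complex \<Rightarrow> real" where f_measurable: "f \<in> borel_measurable borel"
    and f_nonneg: "\<forall>x. 0 \<le> f x" and f_density: "nu (lam ^ k) = density lborel (\<lambda>x. ennreal (f x))"
    and f_square_integrable: "integrable lborel (\<lambda>x. (f x)\<^sup>2)"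
    using assms(3) by blast
  have "lam \<noteq> 0"
  proof
    assume "lam = 0"
    with f_density \<open>k \<ge> 2\<close> have "nu 0 = density lborel (\<lambda>x. ennreal (f x))"
      by (simp add: zero_power)
    with nu_zero_not_density[of "\<lambda>x. ennreal (f x)"] f_measurable show False
      by simp
  qed
  interpret square_integrable_densities f f lam
    using f_measurable f_nonneg f_square_integrable \<open>lam \<noteq> 0\<close> by unfold_locales auto
  define R where "R = distr coin_space borel (partial_sign_series {n. 2 \<le> n mod k} lam)"
  have "nu lam = distr (density lborel (scaled_convolution f lam f) \<Otimes>\<^sub>M R) borel (\<lambda>(x, y). x + y)"
    using nu_decomposition[OF assms(1,2)] by (simp add: f_density distr_pair_density_scaled_add R_def)
  moreover have "finite_measure R"
    unfolding R_def coin_space_def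
    by (intro prob_space.finite_measure prob_space.prob_space_distr prob_space_coin_space[unfolded coin_space_def]
        measurable_partial_sign_series) auto
  ultimately show ?thesis
    using continuous_density_add_finite_measure[OF continuous_on_scaled_convolution
        scaled_convolution_nonneg scaled_convolution_le, of R]
    by (simp add: R_def)
qed

end
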